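(* Let $X$ be a real Banach space with the Ball Small Combination of Slice Property ($BSCSP$). Then for every separable closed subspace $Y$ of $X$ there exists a separable closed subspace $Z$ of $X$ with $Y\subseteq Z$ such that $Z$ has $BSCSP$.
   Context: For a real Banach space $X$, $B_X$ denotes its closed unit ball and $X^*$ its dual. A slice of a bounded set $C\subseteq X$ is a set $S(C,x^*,\alpha)=\{x\in C: x^*(x)>\sup x^*(C)-\alpha\}$ with $x^*\in X^*$, $\|x^*\|=1$, $\alpha>0$. A convex combination of slices of $C$ is a set $\sum_{i=1}^k \lambda_i S_i=\{\sum_{i=1}^k\lambda_i x_i : x_i\in S_i\}$ where $S_1,\dots,S_k$ are slices of $C$ and $\lambda_i>0$ with $\sum_i\lambda_i=1$. $X$ has the Ball Small Combination of Slice Property ($BSCSP$) if for every $\varepsilon>0$ there is a convex combination of slices of $B_X$ of diameter less than $\varepsilon$. *)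

theory Defs
  imports "HOL-Analysis.Analysis"
begin

definition unit_ball_in :: "'a::real_normed_vector set \<Rightarrow> 'a set" where
  "unit_ball_in Z = {x \<in> Z. norm x \<le> 1}"

text \<open>Bounded (continuous) linear functionals on the subspace Z, i.e. elements of Z^*
  (represented by their values on Z).\<close>
definition dual_on :: "'a::real_normed_vector set \<Rightarrow> ('a \<Rightarrow> real) \<Rightarrow> bool" where
  "dual_on Z f \<longleftrightarrow>
     (\<forall>x\<in>Z. \<forall>y\<in>Z. f (x + y) = f x + f y) \<and>
     (\<forall>c. \<forall>x\<in>Z. f (c *\<^sub>R x) = c * f x) \<and>
     (\<exists>K. \<forall>x\<in>Z. \<bar>f x\<bar> \<le> K * norm x)"

definition fnorm_on :: "'a::real_normed_vector set \<Rightarrow> ('a \<Rightarrow> real) \<Rightarrow> real" where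
  "fnorm_on Z f = Sup ((\<lambda>x. \<bar>f x\<bar>) ` unit_ball_in Z)"

definition slice :: "'a set \<Rightarrow> ('a \<Rightarrow> real) \<Rightarrow> real \<Rightarrow> 'a set" where
  "slice C f \<alpha> = {x \<in> C. f x > Sup (f ` C) - \<alpha>}"

definition is_ball_slice :: "'a::real_normed_vector set \<Rightarrow> 'a set \<Rightarrow> bool" where
  "is_ball_slice Z S \<longleftrightarrow>
     (\<exists>f \<alpha>. dual_on Z f \<and> fnorm_on Z f = 1 \<and> \<alpha> > 0 \<and> S = slice (unit_ball_in Z) f \<alpha>)"

definition BSCSP_on :: "'a::real_normed_vector set \<Rightarrow> bool" where
  "BSCSP_on Z \<longleftrightarrow>
     (\<forall>\<epsilon>>0. \<exists>(k::nat) (S::nat \<Rightarrow> 'a set) (w::nat \<Rightarrow> real).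
        (\<forall>i<k. is_ball_slice Z (S i)) \<and> (\<forall>i<k. w i > 0) \<and> (\<Sum>i<k. w i) = 1 \<and>
        diameter {\<Sum>i<k. w i *\<^sub>R x i | x. \<forall>i<k. x i \<in> S i} < \<epsilon>)"

end

theory Submission
  imports Defs
begin

text \<open>
  BSCSP of \<open>X\<close> provides, for every \<open>n\<close>, a convex combination of slices \<open>S(B\<^sub>X, f, \<alpha>)\<close> of
  diameter \<open>< 1/n\<close>. In each such slice pick a point \<open>p \<in> B\<^sub>X\<close> with \<open>f p > max (1 - \<alpha>) 0\<close>.
  On any subspace \<open>Z\<close> containing \<open>p\<close> the restriction of \<open>f\<close> has norm \<open>t \<in> (max (1 - \<alpha>) 0, 1]\<close>, and the
  slice of \<open>B\<^sub>Z\<close> by \<open>f/t\<close> of depth \<open>(t - 1 + \<alpha>)/t\<close> lies inside the original slice. So the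
  closed span of a countable dense subset of \<open>Y\<close> and of these countably many points is a separable
  subspace whose ball has convex combinations of slices inside the small ones of \<open>B\<^sub>X\<close>.
\<close>

lemma subspace_closure_rat_closed:
  fixes R :: "'a::real_normed_vector set"
  assumes zero: "0 \<in> R" and add: "\<And>x y. x \<in> R \<Longrightarrow> y \<in> R \<Longrightarrow> x + y \<in> R"
    and scale: "\<And>q x. q \<in> \<rat> \<Longrightarrow> x \<in> R \<Longrightarrow> q *\<^sub>R x \<in> R"
  shows "subspace (closure R)"
  unfolding subspace_def
proof (intro conjI ballI allI)
  show "0 \<in> closure R" using zero closure_subset by blast
next
  fix x y assume x: "x \<in> closure R" and y: "y \<in> closure R"
  have "(\<lambda>v. r + v) ` closure R \<subseteq> closure R" if "r \<in> R" for r
    by (rule image_closure_subset) (auto intro!: continuous_intros add that closure_subset[THEN subsetD])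
  then have "(\<lambda>v. v + y) ` closure R \<subseteq> closure R"
    by (intro image_closure_subset) (use y in \<open>auto intro!: continuous_intros simp: add.commute\<close>)
  then show "x + y \<in> closure R" using x by blast
next
  fix c :: real and x assume x: "x \<in> closure R"
  have "(\<lambda>v. q *\<^sub>R v) ` closure R \<subseteq> closure R" if "q \<in> \<rat>" for q
    by (rule image_closure_subset) (auto intro!: continuous_intros scale that closure_subset[THEN subsetD])
  then have "\<rat> \<subseteq> {c. c *\<^sub>R x \<in> closure R}" using x by blast
  moreover have "closed {c. c *\<^sub>R x \<in> closure R}"
    using continuous_closed_vimage[of "closure R" "\<lambda>c. c *\<^sub>R x"]
    by (auto simp: vimage_def intro!: continuous_intros)
  ultimately have "closure \<rat> \<subseteq> {c. c *\<^sub>R x \<in> closure R}" by (rule closure_minimal)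
  then show "c *\<^sub>R x \<in> closure R" using Rats_closure_real by auto
qed

lemma subspace_closure:
  fixes S :: "'a::real_normed_vector set"
  shows "subspace S \<Longrightarrow> subspace (closure S)"
  by (rule subspace_closure_rat_closed) (auto simp: subspace_def)

definition rat_span :: "'a::real_vector set \<Rightarrow> 'a set" where
  "rat_span A = (\<lambda>l. sum_list (map (\<lambda>(q, a). of_rat q *\<^sub>R a) l)) ` lists (UNIV \<times> A)"

lemma countable_rat_span: "countable A \<Longrightarrow> countable (rat_span A)"
  unfolding rat_span_def by (intro countable_image countable_lists) auto

lemma rat_span_superset: "A \<subseteq> rat_span A"
  unfolding rat_span_def by (auto intro!: image_eqI[of _ _ "[(1, a)]" for a])

lemma rat_span_subset_span: "rat_span A \<subseteq> span A"
proof -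
  have "sum_list (map (\<lambda>(q, a). of_rat q *\<^sub>R a) l) \<in> span A" if "l \<in> lists (UNIV \<times> A)" for l
    using that by (induction l) (auto simp: span_base span_zero span_add span_scale)
  then show ?thesis unfolding rat_span_def by blast
qed

lemma sum_list_rat_scaleR:
  fixes l :: "(rat \<times> 'a::real_vector) list"
  shows "sum_list (map (\<lambda>(q, a). of_rat q *\<^sub>R a) (map (\<lambda>(q, a). (r * q, a)) l))
    = of_rat r *\<^sub>R sum_list (map (\<lambda>(q, a). of_rat q *\<^sub>R a) l)"
  by (induction l) (auto simp: scaleR_add_right of_rat_mult o_def)

lemma subspace_closure_rat_span:
  fixes A :: "'a::real_normed_vector set"
  shows "subspace (closure (rat_span A))"
proof (rule subspace_closure_rat_closed)
  show "0 \<in> rat_span A" unfolding rat_span_def by (rule image_eqI[of _ _ "[]"]) auto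
next
  fix x y assume "x \<in> rat_span A" "y \<in> rat_span A"
  then show "x + y \<in> rat_span A"
    unfolding rat_span_def by (auto intro!: image_eqI[of _ _ "l @ m" for l m])
next
  fix q :: real and x assume "q \<in> \<rat>" "x \<in> rat_span A"
  then obtain r l where "q = of_rat r" "l \<in> lists (UNIV \<times> A)"
    "x = sum_list (map (\<lambda>(q, a). of_rat q *\<^sub>R a) l)"
    unfolding rat_span_def Rats_def by auto
  then show "q *\<^sub>R x \<in> rat_span A" unfolding rat_span_def
    by (intro image_eqI[of _ _ "map (\<lambda>(q, a). (r * q, a)) l"]) (use sum_list_rat_scaleR[of r l] in auto)
qed

lemma separable_space_closure_span:
  fixes C :: "'a::real_normed_vector set"
  assumes "countable C"
  shows "separable_space (top_of_set (closure (span C)))"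
proof -
  have "span C \<subseteq> closure (rat_span C)"
    by (rule span_minimal[OF subset_trans[OF rat_span_superset closure_subset] subspace_closure_rat_span])
  then have "closure (span C) \<subseteq> closure (rat_span C)"
    by (simp add: closure_minimal)
  moreover have "rat_span C \<subseteq> closure (span C)"
    using rat_span_subset_span closure_subset by blast
  ultimately show ?thesis
    unfolding separable_space_def using countable_rat_span[OF assms]
    by (intro exI[of _ "rat_span C"]) (auto simp: closure_of_subtopology Int_absorb1 Int_absorb2)
qed

lemma unit_ball_in_0: "subspace Z \<Longrightarrow> 0 \<in> unit_ball_in Z"
  by (simp add: unit_ball_in_def subspace_0)

lemma unit_ball_in_minus: "subspace Z \<Longrightarrow> x \<in> unit_ball_in Z \<Longrightarrow> - x \<in> unit_ball_in Z"
  by (simp add: unit_ball_in_def subspace_neg)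

lemma dual_on_subset: "dual_on Z f \<Longrightarrow> Z' \<subseteq> Z \<Longrightarrow> dual_on Z' f"
  unfolding dual_on_def by blast

lemma dual_on_minus: "dual_on Z f \<Longrightarrow> x \<in> Z \<Longrightarrow> f (- x) = - f x"
  unfolding dual_on_def by (metis mult_minus1 scaleR_minus1_left)

lemma dual_on_divide:
  assumes "dual_on Z f"
  shows "dual_on Z (\<lambda>x. f x / t)"
proof -
  obtain K where "\<forall>x\<in>Z. \<bar>f x\<bar> \<le> K * norm x" using assms unfolding dual_on_def by blast
  then have "\<forall>x\<in>Z. \<bar>f x / t\<bar> \<le> (K / \<bar>t\<bar>) * norm x"
    by (auto simp: abs_divide divide_right_mono)
  then have "\<exists>K. \<forall>x\<in>Z. \<bar>f x / t\<bar> \<le> K * norm x" by blast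
  then show ?thesis using assms unfolding dual_on_def by (auto simp: add_divide_distrib)
qed

lemma bdd_above_abs_dual_on:
  assumes "dual_on Z f"
  shows "bdd_above ((\<lambda>x. \<bar>f x\<bar>) ` unit_ball_in Z)"
proof -
  obtain K where K: "\<forall>x\<in>Z. \<bar>f x\<bar> \<le> K * norm x" using assms unfolding dual_on_def by blast
  have "\<bar>f x\<bar> \<le> \<bar>K\<bar>" if "x \<in> unit_ball_in Z" for x
  proof -
    have "\<bar>f x\<bar> \<le> K * norm x" using K that unfolding unit_ball_in_def by auto
    also have "\<dots> \<le> \<bar>K\<bar> * norm x" by (simp add: mult_right_mono)
    also have "\<dots> \<le> \<bar>K\<bar>" using that unfolding unit_ball_in_def by (simp add: mult_left_le)
    finally show ?thesis .
  qed
  then show ?thesis by (intro bdd_aboveI2[where M="\<bar>K\<bar>"]) auto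
qed

lemma abs_le_fnorm_on: "dual_on Z f \<Longrightarrow> x \<in> unit_ball_in Z \<Longrightarrow> \<bar>f x\<bar> \<le> fnorm_on Z f"
  unfolding fnorm_on_def by (auto intro: cSup_upper bdd_above_abs_dual_on)

lemma bdd_above_dual_on: "dual_on Z f \<Longrightarrow> bdd_above (f ` unit_ball_in Z)"
  by (intro bdd_aboveI2[where M="fnorm_on Z f"]) (meson abs_ge_self abs_le_fnorm_on order_trans)

lemma Sup_dual_on_unit_ball:
  assumes Z: "subspace Z" and f: "dual_on Z f"
  shows "Sup (f ` unit_ball_in Z) = fnorm_on Z f"
proof (rule antisym)
  show "Sup (f ` unit_ball_in Z) \<le> fnorm_on Z f"
    using abs_le_fnorm_on[OF f] unit_ball_in_0[OF Z]
    by (intro cSup_least) (auto intro: order_trans[OF abs_ge_self])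
next
  have "\<bar>f x\<bar> \<le> Sup (f ` unit_ball_in Z)" if x: "x \<in> unit_ball_in Z" for x
  proof (cases "f x \<ge> 0")
    case True
    then show ?thesis using x bdd_above_dual_on[OF f] by (auto intro: cSup_upper)
  next
    case False
    then have "f (- x) = \<bar>f x\<bar>" using dual_on_minus[OF f] x unfolding unit_ball_in_def by auto
    then show ?thesis using bdd_above_dual_on[OF f] unit_ball_in_minus[OF Z x] by (metis cSup_upper image_eqI)
  qed
  then show "fnorm_on Z f \<le> Sup (f ` unit_ball_in Z)"
    unfolding fnorm_on_def using unit_ball_in_0[OF Z] by (intro cSup_least) auto
qed

lemma fnorm_on_divide:
  assumes Z: "subspace Z" and f: "dual_on Z f" and t: "t > 0"
  shows "fnorm_on Z (\<lambda>x. f x / t) = fnorm_on Z f / t"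
proof -
  have "Sup ((\<lambda>y. y / t) ` ((\<lambda>x. \<bar>f x\<bar>) ` unit_ball_in Z)) = fnorm_on Z f / t"
    unfolding fnorm_on_def using t unit_ball_in_0[OF Z] bdd_above_abs_dual_on[OF f]
    by (intro continuous_at_Sup_mono[symmetric])
      (auto simp: mono_def divide_right_mono intro!: continuous_intros)
  then show ?thesis using t by (simp add: fnorm_on_def image_image abs_divide)
qed

lemma slice_restriction:
  fixes f :: "'a::real_normed_vector \<Rightarrow> real"
  assumes Z: "subspace Z" and f: "dual_on UNIV f" "fnorm_on UNIV f = 1"
    and p: "p \<in> Z" "norm p \<le> 1" "f p > max (1 - \<alpha>) 0"
  shows "\<exists>S. is_ball_slice Z S \<and> S \<subseteq> slice (unit_ball_in UNIV) f \<alpha>"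
proof -
  have fZ: "dual_on Z f" using f(1) by (rule dual_on_subset) simp
  define t where "t = fnorm_on Z f"
  have "f p \<le> t" using abs_le_fnorm_on[OF fZ, of p] p unfolding t_def unit_ball_in_def by auto
  then have t: "t > 0" "t > 1 - \<alpha>" using p by auto
  define h where "h = (\<lambda>x. f x / t)"
  have h: "dual_on Z h" "fnorm_on Z h = 1"
    using dual_on_divide[OF fZ] fnorm_on_divide[OF Z fZ t(1)] t unfolding h_def t_def by auto
  define \<beta> where "\<beta> = (t - 1 + \<alpha>) / t"
  have "\<beta> > 0" using t unfolding \<beta>_def by auto
  then have "is_ball_slice Z (slice (unit_ball_in Z) h \<beta>)" unfolding is_ball_slice_def using h by blast
  moreover have "slice (unit_ball_in Z) h \<beta> \<subseteq> slice (unit_ball_in UNIV) f \<alpha>"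
  proof
    fix z assume "z \<in> slice (unit_ball_in Z) h \<beta>"
    then have z: "z \<in> unit_ball_in Z" "h z > 1 - \<beta>"
      unfolding slice_def Sup_dual_on_unit_ball[OF Z h(1)] h(2) by auto
    have "1 - \<beta> = (1 - \<alpha>) / t" using t unfolding \<beta>_def by (simp add: field_simps)
    then have "f z > 1 - \<alpha>" using z(2) t unfolding h_def by (simp add: divide_less_cancel)
    then show "z \<in> slice (unit_ball_in UNIV) f \<alpha>" using z(1)
      unfolding slice_def Sup_dual_on_unit_ball[OF subspace_UNIV f(1)] f(2)
      by (auto simp: unit_ball_in_def)
  qed
  ultimately show ?thesis by blast
qed

lemma ball_slice_witness:
  fixes S :: "'a::real_normed_vector set"
  assumes "is_ball_slice UNIV S"
  obtains p where "\<And>Z. subspace Z \<Longrightarrow> p \<in> Z \<Longrightarrow> \<exists>S'. is_ball_slice Z S' \<and> S' \<subseteq> S"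
proof -
  obtain f \<alpha> where f: "dual_on UNIV f" "fnorm_on UNIV f = 1" "\<alpha> > 0"
    and S: "S = slice (unit_ball_in UNIV) f \<alpha>"
    using assms unfolding is_ball_slice_def by blast
  have "max (1 - \<alpha>) 0 < Sup (f ` unit_ball_in UNIV)"
    using Sup_dual_on_unit_ball[OF subspace_UNIV f(1)] f by simp
  then obtain p where "p \<in> unit_ball_in UNIV" "f p > max (1 - \<alpha>) 0"
    using less_cSupE unit_ball_in_0[OF subspace_UNIV] by blast
  then show thesis
    using slice_restriction[OF _ f(1,2)] S by (intro that[of p]) (auto simp: unit_ball_in_def)
qed

definition weighted_sums :: "nat \<Rightarrow> (nat \<Rightarrow> real) \<Rightarrow> (nat \<Rightarrow> 'a::real_vector set) \<Rightarrow> 'a set" where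
  "weighted_sums k w S = {\<Sum>i<k. w i *\<^sub>R x i | x. \<forall>i<k. x i \<in> S i}"

lemma BSCSP_on_weighted_sums:
  "BSCSP_on Z \<longleftrightarrow>
     (\<forall>\<epsilon>>0. \<exists>k S w. (\<forall>i<k. is_ball_slice Z (S i)) \<and> (\<forall>i<k. w i > 0) \<and> (\<Sum>i<k. w i) = 1 \<and>
        diameter (weighted_sums k w S) < \<epsilon>)"
  unfolding BSCSP_on_def weighted_sums_def ..

lemma weighted_sums_mono: "(\<And>i. i < k \<Longrightarrow> T i \<subseteq> S i) \<Longrightarrow> weighted_sums k w T \<subseteq> weighted_sums k w S"
  unfolding weighted_sums_def by blast

lemma bounded_weighted_sums:
  fixes S :: "nat \<Rightarrow> 'a::real_normed_vector set"
  assumes "\<And>i. i < k \<Longrightarrow> bounded (S i)"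
  shows "bounded (weighted_sums k w S)"
proof -
  have "\<forall>i. \<exists>B. i < k \<longrightarrow> (\<forall>x\<in>S i. norm x \<le> B)" using assms by (auto simp: bounded_iff)
  then obtain B where B: "\<And>i x. i < k \<Longrightarrow> x \<in> S i \<Longrightarrow> norm x \<le> B i" by metis
  have "norm (\<Sum>i<k. w i *\<^sub>R x i) \<le> (\<Sum>i<k. \<bar>w i\<bar> * B i)" if "\<forall>i<k. x i \<in> S i" for x
  proof -
    have "norm (\<Sum>i<k. w i *\<^sub>R x i) \<le> (\<Sum>i<k. norm (w i *\<^sub>R x i))" by (rule norm_sum)
    also have "\<dots> \<le> (\<Sum>i<k. \<bar>w i\<bar> * B i)"
      using that B by (intro sum_mono) (auto intro: mult_left_mono)
    finally show ?thesis .
  qed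
  then show ?thesis unfolding bounded_iff weighted_sums_def by blast
qed

lemma bounded_ball_slice: "is_ball_slice Z S \<Longrightarrow> bounded S"
  unfolding is_ball_slice_def slice_def unit_ball_in_def bounded_iff by auto

lemma combination_witnesses:
  fixes S :: "nat \<Rightarrow> 'a::real_normed_vector set"
  assumes "\<forall>i<k. is_ball_slice UNIV (S i)"
  obtains P where "\<And>Z :: 'a set. subspace Z \<Longrightarrow> P ` {..<k} \<subseteq> Z \<Longrightarrow>
    \<exists>T. (\<forall>i<k. is_ball_slice Z (T i)) \<and> diameter (weighted_sums k w T) \<le> diameter (weighted_sums k w S)"
proof -
  have "\<forall>i. \<exists>p. i < k \<longrightarrow> (\<forall>Z. subspace Z \<longrightarrow> p \<in> Z \<longrightarrow> (\<exists>S'. is_ball_slice Z S' \<and> S' \<subseteq> S i))"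
  proof
    fix i
    show "\<exists>p. i < k \<longrightarrow> (\<forall>Z. subspace Z \<longrightarrow> p \<in> Z \<longrightarrow> (\<exists>S'. is_ball_slice Z S' \<and> S' \<subseteq> S i))"
    proof (cases "i < k")
      case True
      then obtain p where "\<And>Z. subspace Z \<Longrightarrow> p \<in> Z \<Longrightarrow> \<exists>S'. is_ball_slice Z S' \<and> S' \<subseteq> S i"
        using assms ball_slice_witness[of "S i"] by blast
      then show ?thesis by blast
    qed simp
  qed
  then obtain P
    where P: "\<And>i Z. i < k \<Longrightarrow> subspace Z \<Longrightarrow> P i \<in> Z \<Longrightarrow> \<exists>S'. is_ball_slice Z S' \<and> S' \<subseteq> S i"
    unfolding choice_iff by blast
  show thesis
  proof (rule that)
    fix Z assume Z: "subspace Z" "P ` {..<k} \<subseteq> Z"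
    then have "\<forall>i. \<exists>S'. i < k \<longrightarrow> is_ball_slice Z S' \<and> S' \<subseteq> S i" using P by blast
    then obtain T where T: "\<And>i. i < k \<Longrightarrow> is_ball_slice Z (T i) \<and> T i \<subseteq> S i"
      unfolding choice_iff by blast
    have "diameter (weighted_sums k w T) \<le> diameter (weighted_sums k w S)"
      using assms T by (intro diameter_subset weighted_sums_mono bounded_weighted_sums bounded_ball_slice) auto
    with T show "\<exists>T. (\<forall>i<k. is_ball_slice Z (T i)) \<and>
        diameter (weighted_sums k w T) \<le> diameter (weighted_sums k w S)"
      by (intro exI[of _ T]) simp
  qed
qed

lemma BSCSP_on_UNIV_countable_witnesses:
  assumes "BSCSP_on (UNIV :: 'a::real_normed_vector set)"
  obtains D where "countable D" "\<And>Z :: 'a set. subspace Z \<Longrightarrow> D \<subseteq> Z \<Longrightarrow> BSCSP_on Z"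
proof -
  have "\<forall>n. \<exists>k S w. (\<forall>i<k. is_ball_slice (UNIV :: 'a set) (S i)) \<and> (\<forall>i<k. w i > 0) \<and> (\<Sum>i<k. w i) = 1 \<and>
      diameter (weighted_sums k w S) < 1 / real (Suc n)"
    using assms unfolding BSCSP_on_weighted_sums by auto
  then obtain K and S :: "nat \<Rightarrow> nat \<Rightarrow> 'a set" and W
    where KSW: "\<And>n. (\<forall>i<K n. is_ball_slice UNIV (S n i)) \<and> (\<forall>i<K n. W n i > 0) \<and>
      (\<Sum>i<K n. W n i) = 1 \<and> diameter (weighted_sums (K n) (W n) (S n)) < 1 / real (Suc n)"
    unfolding choice_iff by blast
  have "\<exists>P. \<forall>Z :: 'a set. subspace Z \<longrightarrow> P ` {..<K n} \<subseteq> Z \<longrightarrow> (\<exists>T. (\<forall>i<K n. is_ball_slice Z (T i)) \<and>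
      diameter (weighted_sums (K n) (W n) T) \<le> diameter (weighted_sums (K n) (W n) (S n)))" for n
  proof -
    obtain P where "\<And>Z :: 'a set. subspace Z \<Longrightarrow> P ` {..<K n} \<subseteq> Z \<Longrightarrow>
        \<exists>T. (\<forall>i<K n. is_ball_slice Z (T i)) \<and> diameter (weighted_sums (K n) (W n) T) \<le> diameter (weighted_sums (K n) (W n) (S n))"
      by (rule combination_witnesses[OF conjunct1[OF KSW[of n]]]) blast
    then show ?thesis by blast
  qed
  from choice[OF allI[OF this]] obtain P
    where P: "\<forall>n. \<forall>Z :: 'a set. subspace Z \<longrightarrow> P n ` {..<K n} \<subseteq> Z \<longrightarrow> (\<exists>T. (\<forall>i<K n. is_ball_slice Z (T i)) \<and>
      diameter (weighted_sums (K n) (W n) T) \<le> diameter (weighted_sums (K n) (W n) (S n)))" ..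
  define D where "D = (\<Union>n. P n ` {..<K n})"
  have "BSCSP_on Z" if Z: "subspace Z" "D \<subseteq> Z" for Z
    unfolding BSCSP_on_weighted_sums
  proof (intro allI impI)
    fix \<epsilon> :: real assume "\<epsilon> > 0"
    then obtain n where n: "1 / real (Suc n) < \<epsilon>" by (rule nat_approx_posE)
    obtain T where "\<forall>i<K n. is_ball_slice Z (T i)"
      "diameter (weighted_sums (K n) (W n) T) \<le> diameter (weighted_sums (K n) (W n) (S n))"
      using P Z unfolding D_def by blast
    then show "\<exists>k S w. (\<forall>i<k. is_ball_slice Z (S i)) \<and> (\<forall>i<k. w i > 0) \<and> (\<Sum>i<k. w i) = 1 \<and>
        diameter (weighted_sums k w S) < \<epsilon>"
      using KSW[of n] n by (intro exI[of _ "K n"] exI[of _ T] exI[of _ "W n"]) auto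
  qed
  moreover have "countable D" unfolding D_def by simp
  ultimately show thesis using that by blast
qed

theorem mainTheorem1:
  fixes Y :: "'a::banach set"
  assumes "BSCSP_on (UNIV :: 'a set)"
    and "subspace Y" and "closed Y" and "separable_space (top_of_set Y)"
  shows "\<exists>Z. subspace Z \<and> closed Z \<and> separable_space (top_of_set Z) \<and> Y \<subseteq> Z \<and> BSCSP_on Z"
proof -
  obtain D :: "'a set" where D: "countable D" "\<And>Z. subspace Z \<Longrightarrow> D \<subseteq> Z \<Longrightarrow> BSCSP_on Z"
    by (rule BSCSP_on_UNIV_countable_witnesses[OF assms(1)]) blast
  obtain C where C: "countable C" "Y \<subseteq> closure C"
    using assms(4) unfolding separable_space_def by (auto simp: closure_of_subtopology Int_absorb2)
  define Z where "Z = closure (span (C \<union> D))"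
  have "subspace Z" unfolding Z_def by (intro subspace_closure subspace_span)
  moreover have "closed Z" unfolding Z_def by simp
  moreover have "separable_space (top_of_set Z)"
    unfolding Z_def using C(1) D(1) by (intro separable_space_closure_span) simp
  moreover have "Y \<subseteq> Z" "D \<subseteq> Z"
    using C(2) closure_mono[OF span_superset[of "C \<union> D"]] closure_subset[of "span (C \<union> D)"]
      span_superset[of "C \<union> D"]
    unfolding Z_def by auto
  ultimately show ?thesis using D(2) by blast
qed

end
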